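(* For $b\ge 0$ let $a_b$ be the total number of cards for $b$ balls (so $a_0=1$, $a_1=2$, $a_2=7$). Then for all $b\ge 3$, \[ a_b=4a_{b-1}-2a_{b-2}. \]
   Context: For an integer $b\ge 0$, an ordered partition of $b$ is a finite sequence $(q_1,\ldots,q_k)$ of positive integers summing to $b$ (for $b=0$ the only one is the empty sequence). An ordered partition $(q_1,\ldots,q_k)$ with $k\ge1$ is nontrivially embedded into an ordered partition $(r_1,\ldots,r_\ell)$ by a choice of indices $1\le i_2<i_3<\cdots<i_k\le \ell$ with $q_j\le r_{i_j}$ for $2\le j\le k$; different index tuples count as different embeddings. A card for $b$ balls is either (i) a trivial card, given by an ordered partition $q$ of $b$, whose left and right partitions are both $q$; or (ii) a throw card, given by ordered partitions $q=(q_1,\ldots,q_k)$ ($k\ge1$) and $r=(r_1,\ldots,r_\ell)$ of $b$ together with a nontrivial embedding $(i_2,\ldots,i_k)$ of $q$ into $r$; its left partition is $q$ and its right partition is $r$. Different index tuples give different cards, and a throw card is distinct from the trivial card even when $q=r$. *)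

theory Defs
  imports Main
begin

definition ordered_partitions :: "nat \<Rightarrow> nat list set" where
  "ordered_partitions b = {q. (\<forall>x\<in>set q. 0 < x) \<and> sum_list q = b}"

text \<open>Nontrivial embeddings of q = (q_1..q_k), k \<ge> 1, into r: index lists
  [i_2,...,i_k] (0-based positions into r), strictly increasing, with
  q_j \<le> r_{i_j} for 2 \<le> j \<le> k.\<close>
definition nontrivial_embeddings :: "nat list \<Rightarrow> nat list \<Rightarrow> nat list set" where
  "nontrivial_embeddings q r =
     {is. q \<noteq> [] \<and> length is = length q - 1 \<and> sorted_wrt (<) is \<and>
          (\<forall>i\<in>set is. i < length r) \<and>
          (\<forall>j<length is. q ! Suc j \<le> r ! (is ! j))}"

text \<open>Cards for b balls: trivial cards (Inl q) and throw cards (Inr (q, r, embedding)).\<close>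
definition cards :: "nat \<Rightarrow> (nat list + (nat list \<times> nat list \<times> nat list)) set" where
  "cards b = Inl ` ordered_partitions b \<union>
     Inr ` {(q, r, is). q \<in> ordered_partitions b \<and> r \<in> ordered_partitions b \<and>
                        is \<in> nontrivial_embeddings q r}"

definition num_cards :: "nat \<Rightarrow> nat" where
  "num_cards b = card (cards b)"

end

theory Submission
  imports Defs
begin

text \<open>
  Fix the right partition \<open>r = (r\<^sub>1, \<dots>, r\<^sub>l)\<close> of \<open>b\<close>.  Dropping \<open>q\<^sub>1\<close>, the throw cards
  with right partition \<open>r\<close> are the embeddings into \<open>r\<close> of ordered partitions of numbers
  below \<open>b\<close>, while the trivial card with partition \<open>r\<close> corresponds to the only embedding of
  an ordered partition of \<open>b\<close> itself, namely \<open>r\<close> into \<open>r\<close>.  So the cards with right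
  partition \<open>r\<close> are all embeddings into \<open>r\<close> of ordered partitions of at most \<open>b\<close>; such an
  embedding puts on each part \<open>r\<^sub>i\<close> either nothing or a value in \<open>1..r\<^sub>i\<close>, so there are
  \<open>\<Prod>(r\<^sub>i + 1)\<close> of them.  Splitting off the first part of \<open>r\<close> gives the convolution
  \<open>a\<^sub>n = \<Sum>\<^sub>k\<^sub><\<^sub>n (n - k + 1) a\<^sub>k\<close> for \<open>n \<ge> 1\<close>, and taking differences twice yields the
  recurrence.
\<close>

definition embeddings :: "nat list \<Rightarrow> nat list \<Rightarrow> nat list set" where
  "embeddings q r = {ks. length ks = length q \<and> sorted_wrt (<) ks \<and>
     (\<forall>i\<in>set ks. i < length r) \<and> (\<forall>j<length ks. q ! j \<le> r ! (ks ! j))}"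

fun n_embeddings :: "nat list \<Rightarrow> nat list \<Rightarrow> nat" where
  "n_embeddings q [] = (if q = [] then 1 else 0)"
| "n_embeddings q (y # r) =
     (if q \<noteq> [] \<and> hd q \<le> y then n_embeddings (tl q) r else 0) + n_embeddings q r"

lemma nontrivial_embeddings_Nil [simp]: "nontrivial_embeddings [] r = {}"
  by (simp add: nontrivial_embeddings_def)

lemma nontrivial_embeddings_Cons [simp]: "nontrivial_embeddings (x # q) r = embeddings q r"
  by (auto simp: nontrivial_embeddings_def embeddings_def)

lemma map_Suc_in_embeddings_Cons:
  "map Suc js \<in> embeddings q (y # r) \<longleftrightarrow> js \<in> embeddings q r"
  by (simp add: embeddings_def sorted_wrt_map)

lemma Cons_0_map_Suc_in_embeddings_Cons:
  "0 # map Suc js \<in> embeddings (x # q) (y # r) \<longleftrightarrow> x \<le> y \<and> js \<in> embeddings q r"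
  by (auto simp: embeddings_def sorted_wrt_map All_less_Suc2)

lemma sorted_less_shift_cases:
  fixes ks :: "nat list"
  assumes "sorted_wrt (<) ks"
  obtains js where "ks = map Suc js" | js where "ks = 0 # map Suc js"
proof (cases "0 \<in> set ks")
  case True
  then obtain ks' where "ks = 0 # ks'" "\<forall>k\<in>set ks'. 0 < k"
    using assms by (cases ks) auto
  then have "ks = 0 # map Suc (map (\<lambda>k. k - 1) ks')"
    by (simp add: map_idI)
  then show ?thesis by (rule that(2))
next
  case False
  then have "\<forall>k\<in>set ks. 0 < k"
    by (auto intro: gr0I)
  then have "ks = map Suc (map (\<lambda>k. k - 1) ks)"
    by (simp add: map_idI)
  then show ?thesis by (rule that(1))
qed

lemma embeddings_Cons_right:
  "embeddings q (y # r) =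
     (if q \<noteq> [] \<and> hd q \<le> y then (\<lambda>js. 0 # map Suc js) ` embeddings (tl q) r else {})
     \<union> map Suc ` embeddings q r" (is "_ = ?rhs")
proof (intro equalityI subsetI)
  fix ks assume ks: "ks \<in> embeddings q (y # r)"
  then have "sorted_wrt (<) ks" by (simp add: embeddings_def)
  then show "ks \<in> ?rhs"
  proof (cases rule: sorted_less_shift_cases)
    case (1 js)
    then show ?thesis using ks by (auto simp: map_Suc_in_embeddings_Cons)
  next
    case (2 js)
    then obtain x q' where "q = x # q'" using ks by (cases q) (auto simp: embeddings_def)
    then show ?thesis using 2 ks by (auto simp: Cons_0_map_Suc_in_embeddings_Cons)
  qed
next
  fix ks assume "ks \<in> ?rhs"
  then show "ks \<in> embeddings q (y # r)"
    by (cases q)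
      (auto simp: map_Suc_in_embeddings_Cons Cons_0_map_Suc_in_embeddings_Cons split: if_splits)
qed

lemma finite_embeddings: "finite (embeddings q r)"
proof (rule finite_subset)
  show "embeddings q r \<subseteq> {ks. set ks \<subseteq> {..<length r} \<and> length ks = length q}"
    by (auto simp: embeddings_def)
qed (simp add: finite_lists_length_eq)

lemma card_embeddings: "card (embeddings q r) = n_embeddings q r"
proof (induction r arbitrary: q)
  case Nil
  have "embeddings q [] = (if q = [] then {[]} else {})"
    by (auto simp: embeddings_def)
  then show ?case by simp
next
  case (Cons y r)
  let ?A = "if q \<noteq> [] \<and> hd q \<le> y then (\<lambda>js. 0 # map Suc js) ` embeddings (tl q) r else {}"
  let ?B = "map Suc ` embeddings q r"
  have "inj_on (\<lambda>js. 0 # map Suc js) A" "inj_on (map Suc) A" for A :: "nat list set"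
    by (auto simp: inj_on_def)
  then have "card ?A = (if q \<noteq> [] \<and> hd q \<le> y then n_embeddings (tl q) r else 0)"
    and "card ?B = n_embeddings q r"
    using Cons.IH by (simp_all add: card_image)
  moreover have "?A \<inter> ?B = {}" by auto
  ultimately show ?case
    by (simp add: embeddings_Cons_right card_Un_disjoint finite_embeddings)
qed

lemma n_embeddings_eq_0: "sum_list r < sum_list q \<Longrightarrow> n_embeddings q r = 0"
proof (induction r arbitrary: q)
  case (Cons y r)
  then show ?case by (cases q) auto
qed auto

lemma n_embeddings_same_sum:
  "\<forall>x\<in>set r. 0 < x \<Longrightarrow> sum_list q = sum_list r \<Longrightarrow> n_embeddings q r = (if q = r then 1 else 0)"
proof (induction r arbitrary: q)
  case Nil
  then show ?case by simp
next
  case (Cons y r)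
  then have rest: "n_embeddings q r = 0" by (intro n_embeddings_eq_0) simp
  show ?case
  proof (cases q)
    case Nil
    then show ?thesis using rest by simp
  next
    case q: (Cons a q')
    then show ?thesis
      using Cons.IH[of q'] Cons.prems rest n_embeddings_eq_0[of r q'] by (cases "a = y") auto
  qed
qed

definition ordered_partitions_upto :: "nat \<Rightarrow> nat list set" where
  "ordered_partitions_upto m = {q. (\<forall>x\<in>set q. 0 < x) \<and> sum_list q \<le> m}"

lemma length_le_sum_list: "\<forall>x\<in>set q. 0 < (x::nat) \<Longrightarrow> length q \<le> sum_list q"
  by (induction q) auto

lemma sum_list_eq_0_iff_Nil: "\<forall>x\<in>set q. 0 < (x::nat) \<Longrightarrow> sum_list q = 0 \<longleftrightarrow> q = []"
  by (cases q) auto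

lemma finite_ordered_partitions_upto: "finite (ordered_partitions_upto m)"
proof (rule finite_subset)
  show "ordered_partitions_upto m \<subseteq> {q. set q \<subseteq> {..m} \<and> length q \<le> m}"
    using length_le_sum_list member_le_sum_list by (fastforce simp: ordered_partitions_upto_def)
qed (simp add: finite_lists_length_le)

lemma finite_ordered_partitions: "finite (ordered_partitions m)"
  by (rule finite_subset[OF _ finite_ordered_partitions_upto[of m]])
    (auto simp: ordered_partitions_upto_def ordered_partitions_def)

lemma sum_Cons_image_UNION:
  assumes "finite T" "\<forall>t\<in>T. finite (A t)" "inj_on h T"
  shows "sum f (\<Union>t\<in>T. (#) (h t) ` A t) = (\<Sum>t\<in>T. \<Sum>q\<in>A t. f (h t # q))"
proof -
  have "sum f (\<Union>t\<in>T. (#) (h t) ` A t) = (\<Sum>t\<in>T. sum f ((#) (h t) ` A t))"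
    using assms by (intro sum.UNION_disjoint) (auto simp: inj_on_def)
  also have "\<dots> = (\<Sum>t\<in>T. \<Sum>q\<in>A t. f (h t # q))"
    by (simp add: sum.reindex inj_on_def)
  finally show ?thesis .
qed

lemma ordered_partitions_upto_eq_insert_UNION:
  "ordered_partitions_upto m = insert [] (\<Union>t\<in>{1..m}. (#) t ` ordered_partitions_upto (m - t))"
proof -
  have "q \<in> (\<Union>t\<in>{1..m}. (#) t ` ordered_partitions_upto (m - t))"
    if "q \<in> ordered_partitions_upto m" "q \<noteq> []" for q
    using that by (cases q) (auto simp: ordered_partitions_upto_def image_iff)
  then show ?thesis by (auto simp: ordered_partitions_upto_def)
qed

lemma sum_ordered_partitions_upto:
  "sum g (ordered_partitions_upto m) =
     g [] + (\<Sum>t\<in>{1..m}. \<Sum>q\<in>ordered_partitions_upto (m - t). g (t # q))"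
  by (subst ordered_partitions_upto_eq_insert_UNION, subst sum.insert)
    (auto simp: finite_ordered_partitions_upto sum_Cons_image_UNION[where h = id, simplified])

definition total_embeddings :: "nat list \<Rightarrow> nat" where
  "total_embeddings r = (\<Sum>q\<in>ordered_partitions_upto (sum_list r). n_embeddings q r)"

lemma sum_n_embeddings_ordered_partitions_upto:
  assumes "sum_list r \<le> m"
  shows "(\<Sum>q\<in>ordered_partitions_upto m. n_embeddings q r) = total_embeddings r"
  unfolding total_embeddings_def
proof (rule sum.mono_neutral_right)
  show "\<forall>q\<in>ordered_partitions_upto m - ordered_partitions_upto (sum_list r). n_embeddings q r = 0"
  proof
    fix q assume "q \<in> ordered_partitions_upto m - ordered_partitions_upto (sum_list r)"
    then have "sum_list r < sum_list q" by (auto simp: ordered_partitions_upto_def)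
    then show "n_embeddings q r = 0" by (rule n_embeddings_eq_0)
  qed
  show "finite (ordered_partitions_upto m)"
    by (rule finite_ordered_partitions_upto)
  show "ordered_partitions_upto (sum_list r) \<subseteq> ordered_partitions_upto m"
    using assms by (auto simp: ordered_partitions_upto_def)
qed

lemma total_embeddings_Cons:
  assumes "0 < s"
  shows "total_embeddings (s # p) = (s + 1) * total_embeddings p"
proof -
  \<comment> \<open>The part \<open>s\<close> receives either nothing or a first part \<open>t \<in> {1..s}\<close> of the embedded partition.\<close>
  let ?m = "s + sum_list p"
  have "total_embeddings (s # p) =
      (\<Sum>q\<in>ordered_partitions_upto ?m. if q \<noteq> [] \<and> hd q \<le> s then n_embeddings (tl q) p else 0)
      + (\<Sum>q\<in>ordered_partitions_upto ?m. n_embeddings q p)"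
    by (simp add: total_embeddings_def sum.distrib)
  also have "(\<Sum>q\<in>ordered_partitions_upto ?m. n_embeddings q p) = total_embeddings p"
    by (rule sum_n_embeddings_ordered_partitions_upto) simp
  also have "(\<Sum>q\<in>ordered_partitions_upto ?m. if q \<noteq> [] \<and> hd q \<le> s then n_embeddings (tl q) p else 0)
      = (\<Sum>t\<in>{1..?m}. \<Sum>q\<in>ordered_partitions_upto (?m - t). if t \<le> s then n_embeddings q p else 0)"
    by (subst sum_ordered_partitions_upto) (simp cong: if_cong)
  also have "\<dots> = (\<Sum>t\<in>{1..?m}. if t \<le> s then total_embeddings p else 0)"
    by (intro sum.cong refl) (auto intro: sum_n_embeddings_ordered_partitions_upto)
  also have "\<dots> = (\<Sum>t\<in>{1..s}. total_embeddings p)"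
    by (rule sum.mono_neutral_cong_right) auto
  finally show ?thesis by simp
qed

lemma total_embeddings_eq_prod_list:
  "\<forall>x\<in>set r. 0 < x \<Longrightarrow> total_embeddings r = (\<Prod>x\<leftarrow>r. x + 1)"
proof (induction r)
  case Nil
  have "ordered_partitions_upto 0 = {[]}"
    by (auto simp: ordered_partitions_upto_def sum_list_eq_0_iff_Nil simp del: sum_list_eq_0_iff)
  then show ?case by (simp add: total_embeddings_def)
qed (simp add: total_embeddings_Cons)

lemma ordered_partitions_eq_image:
  assumes "1 \<le> b"
  shows "ordered_partitions b = (\<lambda>q. (b - sum_list q) # q) ` ordered_partitions_upto (b - 1)"
proof
  show "(\<lambda>q. (b - sum_list q) # q) ` ordered_partitions_upto (b - 1) \<subseteq> ordered_partitions b"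
    using assms by (auto simp: ordered_partitions_upto_def ordered_partitions_def)
  show "ordered_partitions b \<subseteq> (\<lambda>q. (b - sum_list q) # q) ` ordered_partitions_upto (b - 1)"
  proof
    fix q assume q: "q \<in> ordered_partitions b"
    then obtain a q' where "q = a # q'"
      using assms by (cases q) (auto simp: ordered_partitions_def)
    then show "q \<in> (\<lambda>q. (b - sum_list q) # q) ` ordered_partitions_upto (b - 1)"
      using q by (auto simp: ordered_partitions_upto_def ordered_partitions_def image_iff)
  qed
qed

lemma ordered_partitions_eq_UNION:
  assumes "1 \<le> n"
  shows "ordered_partitions n = (\<Union>k<n. (#) (n - k) ` ordered_partitions k)"
proof -
  have "q \<in> (\<Union>k<n. (#) (n - k) ` ordered_partitions k)" if "q \<in> ordered_partitions n" for q
    using that assms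
    by (cases q) (auto simp: ordered_partitions_def image_iff intro!: bexI[where x = "sum_list (tl q)"])
  then show ?thesis by (auto simp: ordered_partitions_def)
qed

lemma ordered_partitions_0: "ordered_partitions 0 = {[]}"
  by (auto simp: ordered_partitions_def sum_list_eq_0_iff_Nil simp del: sum_list_eq_0_iff)

lemma sum_card_nontrivial_embeddings:
  assumes r: "r \<in> ordered_partitions b"
  shows "(\<Sum>q\<in>ordered_partitions b. card (nontrivial_embeddings q r)) + 1 = (\<Prod>x\<leftarrow>r. x + 1)"
proof (cases "b = 0")
  case True
  then show ?thesis using r by (simp add: ordered_partitions_0)
next
  case False
  have inj: "inj_on (\<lambda>q. (b - sum_list q) # q) (ordered_partitions_upto (b - 1))"
    by (auto simp: inj_on_def)
  have throw: "(\<Sum>q\<in>ordered_partitions b. card (nontrivial_embeddings q r)) =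
      (\<Sum>q\<in>ordered_partitions_upto (b - 1). n_embeddings q r)"
    using False
    by (subst ordered_partitions_eq_image, simp, subst sum.reindex[OF inj]) (simp add: card_embeddings)
  have trivial: "(\<Sum>q\<in>ordered_partitions b. n_embeddings q r) = 1"
  proof -
    have "(\<Sum>q\<in>ordered_partitions b. n_embeddings q r) = (\<Sum>q\<in>ordered_partitions b. if q = r then 1 else 0)"
      using r by (intro sum.cong refl n_embeddings_same_sum) (auto simp: ordered_partitions_def)
    then show ?thesis using r finite_ordered_partitions by simp
  qed
  have "ordered_partitions_upto b = ordered_partitions_upto (b - 1) \<union> ordered_partitions b"
    and "ordered_partitions_upto (b - 1) \<inter> ordered_partitions b = {}"
    using False by (auto simp: ordered_partitions_upto_def ordered_partitions_def)
  then have "(\<Sum>q\<in>ordered_partitions_upto b. n_embeddings q r) =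
      (\<Sum>q\<in>ordered_partitions_upto (b - 1). n_embeddings q r) + 1"
    using trivial
    by (simp add: sum.union_disjoint finite_ordered_partitions_upto finite_ordered_partitions)
  moreover have "(\<Sum>q\<in>ordered_partitions_upto b. n_embeddings q r) = (\<Prod>x\<leftarrow>r. x + 1)"
    using r total_embeddings_eq_prod_list[of r]
    by (simp add: total_embeddings_def ordered_partitions_def)
  ultimately show ?thesis using throw by simp
qed

lemma num_cards_eq_sum_prod_list:
  "num_cards b = (\<Sum>r\<in>ordered_partitions b. \<Prod>x\<leftarrow>r. x + 1)"
proof -
  let ?O = "ordered_partitions b"
  let ?S = "SIGMA q:?O. SIGMA r:?O. nontrivial_embeddings q r"
  have finite_nontrivial: "finite (nontrivial_embeddings q r)" for q r
    by (cases q) (simp_all add: finite_embeddings)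
  have cards: "cards b = Inl ` ?O \<union> Inr ` ?S"
    by (auto simp: cards_def)
  have "num_cards b = card ?O + card ?S"
    unfolding num_cards_def cards
    by (subst card_Un_disjoint)
      (auto simp: finite_ordered_partitions finite_nontrivial card_image)
  also have "card ?S = (\<Sum>q\<in>?O. \<Sum>r\<in>?O. card (nontrivial_embeddings q r))"
    by (simp add: finite_ordered_partitions finite_nontrivial)
  also have "\<dots> = (\<Sum>r\<in>?O. \<Sum>q\<in>?O. card (nontrivial_embeddings q r))"
    by (rule sum.swap)
  also have "card ?O + \<dots> = (\<Sum>r\<in>?O. (\<Sum>q\<in>?O. card (nontrivial_embeddings q r)) + 1)"
    by (simp only: sum.distrib card_eq_sum add.commute)
  also have "\<dots> = (\<Sum>r\<in>?O. \<Prod>x\<leftarrow>r. x + 1)"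
    by (intro sum.cong refl sum_card_nontrivial_embeddings)
  finally show ?thesis .
qed

lemma num_cards_conv:
  assumes "1 \<le> n"
  shows "num_cards n = (\<Sum>k<n. (n - k + 1) * num_cards k)"
proof -
  have "num_cards n = (\<Sum>k<n. \<Sum>p\<in>ordered_partitions k. \<Prod>x\<leftarrow>(n - k) # p. x + 1)"
    unfolding num_cards_eq_sum_prod_list
    by (subst ordered_partitions_eq_UNION[OF assms], rule sum_Cons_image_UNION)
      (auto simp: finite_ordered_partitions inj_on_def)
  also have "\<dots> = (\<Sum>k<n. (n - k + 1) * num_cards k)"
    by (simp add: num_cards_eq_sum_prod_list sum_distrib_left)
  finally show ?thesis .
qed

lemma num_cards_Suc:
  assumes "1 \<le> n"
  shows "num_cards (Suc n) = 3 * num_cards n + (\<Sum>k<n. num_cards k)"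
proof -
  have "num_cards (Suc n) = (\<Sum>k<n. (Suc n - k + 1) * num_cards k) + 2 * num_cards n"
    by (subst num_cards_conv) simp_all
  also have "(\<Sum>k<n. (Suc n - k + 1) * num_cards k) = (\<Sum>k<n. (n - k + 1) * num_cards k + num_cards k)"
    by (intro sum.cong refl) (simp add: Suc_diff_le)
  also have "\<dots> = num_cards n + (\<Sum>k<n. num_cards k)"
    by (simp only: sum.distrib num_cards_conv[OF assms, symmetric])
  finally show ?thesis by simp
qed

theorem theorem4:
  fixes b :: nat
  assumes "b \<ge> 3"
  shows "int (num_cards b) = 4 * int (num_cards (b - 1)) - 2 * int (num_cards (b - 2))"
proof -
  define n where "n = b - 2"
  have n: "b = Suc (Suc n)" "1 \<le> n"
    using assms by (auto simp: n_def)
  have "num_cards (Suc (Suc n)) = 3 * num_cards (Suc n) + num_cards n + (\<Sum>k<n. num_cards k)"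
    by (simp add: num_cards_Suc)
  moreover have "num_cards (Suc n) = 3 * num_cards n + (\<Sum>k<n. num_cards k)"
    using n(2) by (rule num_cards_Suc)
  ultimately show ?thesis
    using n(1) by simp
qed

end
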